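(* Let $\varphi$ be an almost identity PC-map of $\mathrm{UT}(n,F)$ and let $k$ be an integer with $2\le k\le n-3$. If conditions $Z_{k-1}$ and $Y_k$ hold for $\varphi$, then condition $Z_k$ holds for $\varphi$.
   Context: $F$ is a field and $n\in\mathbb N\cup\{\infty\}$. $\mathrm{UT}(n,F)$ is the group of upper unitriangular $n\times n$ matrices over $F$ (for $n=\infty$: all $\mathbb N\times\mathbb N$ matrices with $1$ on the diagonal and $0$ below it). Convention: $\infty+m=\infty$ for $m\in\mathbb Z$. $e$ is the identity matrix, $e_{ij}$ the matrix unit, $t_{ij}(\alpha)=e+\alpha e_{ij}$ ($i<j$). $[x,y]=xyx^{-1}y^{-1}$. A PC-map is a bijection $\varphi$ of the group with $\varphi([x,y])=[\varphi(x),\varphi(y)]$ for all $x,y$; it is almost identity if $\varphi(t_{ij}(\alpha))=t_{ij}(\alpha)$ for all $i<j$, $\alpha\in F$. $C$ denotes the center of $\mathrm{UT}(n,F)$ (trivial if $n=\infty$, equal to $\{t_{1n}(\alpha):\alpha\in F\}$ if $n$ is finite). Conditions: $Y_k$ ($k\le n-3$): for all $\beta,\alpha_1,\dots,\alpha_{k-1}\in F$, the matrix $y=t_{k+1\,k+2}(\beta)\prod_{i=1}^{k-1}t_{ik}(\alpha_i)$ satisfies $\varphi(y)\in yC$. $Z_k$ ($k\le n-3$): for all $\gamma_1,\dots,\gamma_k\in F$, the matrix $z=\prod_{i=1}^{k}t_{i\,k+3}(\gamma_i)$ satisfies $\varphi(z)=z$. (Thus $Z_{k-1}$ says $\varphi$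 fixes every $\prod_{i=1}^{k-1}t_{i\,k+2}(\gamma_i)$.) *)

theory Defs
  imports "HOL-Algebra.Group" "HOL-Library.Extended_Nat"
begin

text \<open>Matrices are functions nat => nat => 'a with rows/columns indexed by
  1,...,n (n :: enat, so n = infinity gives N x N matrices). Entries outside
  the index range are 0.\<close>

type_synonym 'a mat = "nat \<Rightarrow> nat \<Rightarrow> 'a"

definition idx :: "enat \<Rightarrow> nat \<Rightarrow> bool" where
  "idx n i \<longleftrightarrow> 1 \<le> i \<and> enat i \<le> n"

definition UT :: "enat \<Rightarrow> ('a::field) mat set" where
  "UT n = {A. (\<forall>i j. \<not> (idx n i \<and> idx n j) \<longrightarrow> A i j = 0)
              \<and> (\<forall>i. idx n i \<longrightarrow> A i i = 1)
              \<and> (\<forall>i j. j < i \<longrightarrow> A i j = 0)}"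

definition ut_one :: "enat \<Rightarrow> ('a::field) mat" where
  "ut_one n = (\<lambda>i j. if i = j \<and> idx n i then 1 else 0)"

text \<open>Product of upper triangular matrices: only the finitely many
  indices i..j contribute.\<close>
definition ut_mult :: "('a::field) mat \<Rightarrow> 'a mat \<Rightarrow> 'a mat" where
  "ut_mult A B = (\<lambda>i j. \<Sum>l\<in>{i..j}. A i l * B l j)"

definition UT_group :: "enat \<Rightarrow> ('a::field) mat monoid" where
  "UT_group n = \<lparr>carrier = UT n, monoid.mult = ut_mult, one = ut_one n\<rparr>"

definition ut_comm :: "enat \<Rightarrow> ('a::field) mat \<Rightarrow> 'a mat \<Rightarrow> 'a mat" where
  "ut_comm n x y = x \<otimes>\<^bsub>UT_group n\<^esub> y \<otimes>\<^bsub>UT_group n\<^esub> inv\<^bsub>UT_group n\<^esub> x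
                    \<otimes>\<^bsub>UT_group n\<^esub> inv\<^bsub>UT_group n\<^esub> y"

definition tr :: "enat \<Rightarrow> nat \<Rightarrow> nat \<Rightarrow> ('a::field) \<Rightarrow> 'a mat" where
  "tr n i j \<alpha> = (\<lambda>a b. ut_one n a b + (if a = i \<and> b = j then \<alpha> else 0))"

definition ut_prod :: "enat \<Rightarrow> ('a::field) mat list \<Rightarrow> 'a mat" where
  "ut_prod n xs = foldr ut_mult xs (ut_one n)"

definition ut_center :: "enat \<Rightarrow> ('a::field) mat set" where
  "ut_center n = {c \<in> UT n. \<forall>x \<in> UT n. ut_mult c x = ut_mult x c}"

definition PC_map :: "enat \<Rightarrow> (('a::field) mat \<Rightarrow> 'a mat) \<Rightarrow> bool" where
  "PC_map n \<phi> \<longleftrightarrow> bij_betw \<phi> (UT n) (UT n)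
     \<and> (\<forall>x \<in> UT n. \<forall>y \<in> UT n. \<phi> (ut_comm n x y) = ut_comm n (\<phi> x) (\<phi> y))"

definition almost_identity :: "enat \<Rightarrow> (('a::field) mat \<Rightarrow> 'a mat) \<Rightarrow> bool" where
  "almost_identity n \<phi> \<longleftrightarrow>
     (\<forall>i j \<alpha>. idx n i \<and> idx n j \<and> i < j \<longrightarrow> \<phi> (tr n i j \<alpha>) = tr n i j \<alpha>)"

definition cond_Y :: "enat \<Rightarrow> (('a::field) mat \<Rightarrow> 'a mat) \<Rightarrow> nat \<Rightarrow> bool" where
  "cond_Y n \<phi> k \<longleftrightarrow> (\<forall>(\<beta>::'a) (\<alpha>::nat \<Rightarrow> 'a).
     let y = ut_mult (tr n (k+1) (k+2) \<beta>) (ut_prod n (map (\<lambda>i. tr n i k (\<alpha> i)) [1..<k]))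
     in \<phi> y \<in> (\<lambda>c. ut_mult y c) ` ut_center n)"

definition cond_Z :: "enat \<Rightarrow> (('a::field) mat \<Rightarrow> 'a mat) \<Rightarrow> nat \<Rightarrow> bool" where
  "cond_Z n \<phi> k \<longleftrightarrow> (\<forall>\<gamma>::nat \<Rightarrow> 'a.
     let z = ut_prod n (map (\<lambda>i. tr n i (k+3) (\<gamma> i)) [1..<k+1])
     in \<phi> z = z)"

end

theory Submission
  imports Defs
begin

text \<open>Write y(\<beta>, \<alpha>) = t_{k+1,k+2}(\<beta>) t_{1,k}(\<alpha>_1) ... t_{k-1,k}(\<alpha>_{k-1}) for the elements of
  condition Y_k. Since \<phi>(y) \<in> yC and a central factor drops out of a commutator, \<phi> fixes
  [y, t] whenever it fixes t, in particular for every transvection t.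
  Each z = t_{1,k+3}(\<gamma>_1) ... t_{k,k+3}(\<gamma>_k) is obtained from such commutators:
  if \<gamma>_k = 0 then z = [y(0, \<gamma>), t_{k,k+3}(1)]; otherwise z = [g, t_{k+2,k+3}(1)] with
  g = [y(-\<gamma>_k, \<gamma>/\<gamma>_k), t_{k,k+1}(1)], which \<phi> fixes, so \<phi>(z) = [\<phi>(g), \<phi>(t_{k+2,k+3}(1))] = z.\<close>

lemma mem_UT_iff: "A \<in> UT n \<longleftrightarrow> (\<forall>i j. \<not> (idx n i \<and> idx n j) \<longrightarrow> A i j = 0)
    \<and> (\<forall>i. idx n i \<longrightarrow> A i i = 1) \<and> (\<forall>i j. j < i \<longrightarrow> A i j = 0)"
  by (simp add: UT_def)

lemma ut_mult_closed: "A \<in> UT n \<Longrightarrow> B \<in> UT n \<Longrightarrow> ut_mult A B \<in> UT n"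
  unfolding mem_UT_iff ut_mult_def by (auto intro!: sum.neutral)

lemma ut_one_in_UT: "ut_one n \<in> UT n"
  unfolding mem_UT_iff ut_one_def by auto

lemma ut_one_mult: "A \<in> UT n \<Longrightarrow> ut_mult (ut_one n) A = A"
proof (intro ext)
  fix i j
  assume "A \<in> UT n"
  have "ut_mult (ut_one n) A i j = (\<Sum>l\<in>{i..j}. if l = i then (if idx n i then A i j else 0) else 0)"
    unfolding ut_mult_def ut_one_def by (rule sum.cong) auto
  with \<open>A \<in> UT n\<close> show "ut_mult (ut_one n) A i j = A i j"
    unfolding mem_UT_iff by auto
qed

lemma ut_mult_assoc: "ut_mult (ut_mult A B) C = ut_mult A (ut_mult B C)"
proof (intro ext)
  fix i j
  have "ut_mult (ut_mult A B) C i j = (\<Sum>l\<in>{i..j}. \<Sum>m\<in>{m. m \<in> {i..j} \<and> m \<le> l}. A i m * B m l * C l j)"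
    unfolding ut_mult_def sum_distrib_right by (intro sum.cong) auto
  also have "\<dots> = (\<Sum>m\<in>{i..j}. \<Sum>l\<in>{l. l \<in> {i..j} \<and> m \<le> l}. A i m * B m l * C l j)"
    by (rule sum.swap_restrict) auto
  also have "\<dots> = ut_mult A (ut_mult B C) i j"
    unfolding ut_mult_def sum_distrib_left by (intro sum.cong) (auto simp: mult.assoc)
  finally show "ut_mult (ut_mult A B) C i j = ut_mult A (ut_mult B C) i j" .
qed

function ut_linv :: "enat \<Rightarrow> ('a::field) mat \<Rightarrow> nat \<Rightarrow> nat \<Rightarrow> 'a" where
  "ut_linv n A i j = (if \<not> (idx n i \<and> idx n j) \<or> j < i then 0 else if i = j then 1
     else - (\<Sum>l\<in>{i..<j}. ut_linv n A i l * A l j))"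
  by auto
termination by (relation "measure (\<lambda>(n, A, i, j). j - i)") auto

declare ut_linv.simps [simp del]

lemma ut_linv_in_UT: "ut_linv n A \<in> UT n"
  unfolding mem_UT_iff by (auto simp: ut_linv.simps)

lemma ut_linv_mult: "A \<in> UT n \<Longrightarrow> ut_mult (ut_linv n A) A = ut_one n"
proof (intro ext)
  fix i j
  assume A: "A \<in> UT n"
  show "ut_mult (ut_linv n A) A i j = ut_one n i j"
  proof (cases "idx n i \<and> idx n j \<and> i < j")
    case True
    then have "{i..j} = insert j {i..<j}" by auto
    then have "ut_mult (ut_linv n A) A i j
        = ut_linv n A i j * A j j + (\<Sum>l\<in>{i..<j}. ut_linv n A i l * A l j)"
      unfolding ut_mult_def by simp
    also have "\<dots> = 0"
      using True A unfolding mem_UT_iff by (subst (1) ut_linv.simps) auto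
    finally show ?thesis using True unfolding ut_one_def by simp
  next
    case False
    then show ?thesis
      using A ut_linv_in_UT[of n A] unfolding ut_mult_def ut_one_def mem_UT_iff
      by (cases "i = j") (auto intro!: sum.neutral simp: not_less)
  qed
qed

lemma group_UT_group: "group (UT_group n :: ('a::field) mat monoid)"
  by (rule groupI) (auto simp: UT_group_def ut_mult_closed ut_one_in_UT ut_one_mult ut_mult_assoc
      intro!: bexI[of _ "ut_linv n _"] ut_linv_mult ut_linv_in_UT)

lemma ut_comm_eqI:
  assumes "x \<in> UT n" "y \<in> UT n" "w \<in> UT n" "ut_mult x y = ut_mult (ut_mult w y) x"
  shows "ut_comm n x y = (w :: ('a::field) mat)"
proof -
  interpret G: group "UT_group n :: 'a mat monoid" by (rule group_UT_group)
  have G: "carrier (UT_group n) = UT n" "\<And>a b. a \<otimes>\<^bsub>UT_group n\<^esub> b = ut_mult a b"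
    by (simp_all add: UT_group_def)
  have "ut_comm n x y = w \<otimes>\<^bsub>UT_group n\<^esub> y \<otimes>\<^bsub>UT_group n\<^esub> x
      \<otimes>\<^bsub>UT_group n\<^esub> inv\<^bsub>UT_group n\<^esub> x \<otimes>\<^bsub>UT_group n\<^esub> inv\<^bsub>UT_group n\<^esub> y"
    using assms(4) by (simp add: ut_comm_def G)
  also have "\<dots> = w" using assms(1-3) by (simp add: G(1)[symmetric] G.m_assoc)
  finally show ?thesis .
qed

lemma ut_comm_mult_center:
  assumes "x \<in> UT n" "y \<in> UT n" "c \<in> ut_center n"
  shows "ut_comm n (ut_mult x c) y = ut_comm n x (y :: ('a::field) mat)"
proof -
  interpret G: group "UT_group n :: 'a mat monoid" by (rule group_UT_group)
  have G: "carrier (UT_group n) = UT n" "\<And>a b. a \<otimes>\<^bsub>UT_group n\<^esub> b = ut_mult a b"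
    by (simp_all add: UT_group_def)
  have c: "c \<in> UT n" "ut_mult c y = ut_mult y c"
    using assms(2,3) by (auto simp: ut_center_def)
  have "ut_comm n (ut_mult x c) y = x \<otimes>\<^bsub>UT_group n\<^esub> (c \<otimes>\<^bsub>UT_group n\<^esub> y)
      \<otimes>\<^bsub>UT_group n\<^esub> inv\<^bsub>UT_group n\<^esub> c \<otimes>\<^bsub>UT_group n\<^esub> inv\<^bsub>UT_group n\<^esub> x
      \<otimes>\<^bsub>UT_group n\<^esub> inv\<^bsub>UT_group n\<^esub> y"
    using assms(1,2) c(1) by (simp add: ut_comm_def G[symmetric] G.inv_mult_group G.m_assoc)
  also have "\<dots> = x \<otimes>\<^bsub>UT_group n\<^esub> (y \<otimes>\<^bsub>UT_group n\<^esub> c)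
      \<otimes>\<^bsub>UT_group n\<^esub> inv\<^bsub>UT_group n\<^esub> c \<otimes>\<^bsub>UT_group n\<^esub> inv\<^bsub>UT_group n\<^esub> x
      \<otimes>\<^bsub>UT_group n\<^esub> inv\<^bsub>UT_group n\<^esub> y"
    using c(2) by (simp add: G)
  also have "\<dots> = ut_comm n x y"
    using assms(1,2) c(1) by (simp add: ut_comm_def G(1)[symmetric] G.m_assoc)
  finally show ?thesis .
qed

lemma PC_map_ut_comm:
  "PC_map n \<phi> \<Longrightarrow> x \<in> UT n \<Longrightarrow> y \<in> UT n \<Longrightarrow> \<phi> (ut_comm n x y) = ut_comm n (\<phi> x) (\<phi> y)"
  unfolding PC_map_def by blast

lemma PC_map_fixes_ut_comm:
  assumes "PC_map n \<phi>" "x \<in> UT n" "t \<in> UT n"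
    and "\<phi> x \<in> (\<lambda>c. ut_mult x c) ` ut_center n" "\<phi> t = t"
  shows "\<phi> (ut_comm n x t) = ut_comm n x t"
proof -
  obtain c where c: "c \<in> ut_center n" "\<phi> x = ut_mult x c" using assms(4) by blast
  have "\<phi> (ut_comm n x t) = ut_comm n (ut_mult x c) t"
    using PC_map_ut_comm[OF assms(1-3)] assms(5) c(2) by simp
  also have "\<dots> = ut_comm n x t" by (rule ut_comm_mult_center[OF assms(2,3) c(1)])
  finally show ?thesis .
qed

text \<open>Elements of UT are handled as e + S with S strictly upper triangular and supported
  inside the index range, so that products reduce to (e + S)(e + T) = e + (S + T + ST).\<close>
definition unip :: "enat \<Rightarrow> ('a::field) mat \<Rightarrow> 'a mat" where
  "unip n S = (\<lambda>a b. ut_one n a b + S a b)"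

definition strictly_upper :: "enat \<Rightarrow> ('a::field) mat \<Rightarrow> bool" where
  "strictly_upper n S \<longleftrightarrow> (\<forall>a b. S a b \<noteq> 0 \<longrightarrow> idx n a \<and> idx n b \<and> a < b)"

lemma strictly_upper_zero:
  "strictly_upper n S \<Longrightarrow> \<not> (idx n a \<and> idx n b \<and> a < b) \<Longrightarrow> S a b = 0"
  unfolding strictly_upper_def by blast

lemma unip_in_UT: assumes "strictly_upper n S" shows "unip n S \<in> UT n"
  unfolding mem_UT_iff unip_def ut_one_def using strictly_upper_zero[OF assms] by auto

lemma ut_one_mult_strictly_upper: "strictly_upper n S \<Longrightarrow> ut_mult (ut_one n) S = S"
proof (intro ext)
  fix a b
  assume S: "strictly_upper n S"
  have "ut_mult (ut_one n) S a b = (\<Sum>l\<in>{a..b}. if l = a then (if idx n a then S a b else 0) else 0)"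
    unfolding ut_mult_def ut_one_def by (rule sum.cong) auto
  then show "ut_mult (ut_one n) S a b = S a b"
    using strictly_upper_zero[OF S, of a b] by (cases "b < a") auto
qed

lemma ut_mult_one_strictly_upper: "strictly_upper n S \<Longrightarrow> ut_mult S (ut_one n) = S"
proof (intro ext)
  fix a b
  assume S: "strictly_upper n S"
  have "ut_mult S (ut_one n) a b = (\<Sum>l\<in>{a..b}. if l = b then (if idx n b then S a b else 0) else 0)"
    unfolding ut_mult_def ut_one_def by (rule sum.cong) auto
  then show "ut_mult S (ut_one n) a b = S a b"
    using strictly_upper_zero[OF S, of a b] by (cases "b < a") auto
qed

lemma unip_mult:
  assumes "strictly_upper n S" "strictly_upper n T"
  shows "ut_mult (unip n S) (unip n T) = unip n (\<lambda>a b. S a b + T a b + ut_mult S T a b)"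
proof (intro ext)
  fix a b
  have "ut_mult (unip n S) (unip n T) a b = ut_mult (ut_one n) (ut_one n) a b
      + ut_mult S (ut_one n) a b + ut_mult (ut_one n) T a b + ut_mult S T a b"
    unfolding ut_mult_def unip_def by (simp add: algebra_simps sum.distrib)
  then show "ut_mult (unip n S) (unip n T) a b = unip n (\<lambda>a b. S a b + T a b + ut_mult S T a b) a b"
    using assms by (simp add: unip_def ut_one_mult ut_one_in_UT
        ut_one_mult_strictly_upper ut_mult_one_strictly_upper)
qed

lemma strictly_upper_mult:
  assumes "strictly_upper n S" "strictly_upper n T"
  shows "strictly_upper n (\<lambda>a b. S a b + T a b + ut_mult S T a b)"
proof -
  have "idx n a \<and> idx n b \<and> a < b" if "ut_mult S T a b \<noteq> 0" for a b
  proof -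
    from that obtain l where "S a l * T l b \<noteq> 0"
      unfolding ut_mult_def by (meson sum.neutral)
    then show ?thesis using assms unfolding strictly_upper_def by force
  qed
  then show ?thesis using assms unfolding strictly_upper_def by (metis add.right_neutral add_0)
qed

lemma unip_mult_eq:
  assumes "strictly_upper n S" "strictly_upper n T"
    and "\<And>a b. S a b + T a b + ut_mult S T a b = R a b"
  shows "ut_mult (unip n S) (unip n T) = unip n R" and "strictly_upper n R"
proof -
  have R: "R = (\<lambda>a b. S a b + T a b + ut_mult S T a b)" using assms(3) by auto
  show "ut_mult (unip n S) (unip n T) = unip n R" "strictly_upper n R"
    unfolding R using unip_mult[OF assms(1,2)] strictly_upper_mult[OF assms(1,2)] by simp_all
qed

lemma ut_comm_unipI:
  assumes "strictly_upper n X" "strictly_upper n T" "strictly_upper n W"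
    and "\<And>a b. X a b + T a b + ut_mult X T a b = R a b"
    and "\<And>a b. W a b + T a b + ut_mult W T a b = V a b"
    and "\<And>a b. V a b + X a b + ut_mult V X a b = R a b"
  shows "ut_comm n (unip n X) (unip n T) = unip n W"
proof (rule ut_comm_eqI)
  have WT: "ut_mult (unip n W) (unip n T) = unip n V" "strictly_upper n V"
    using unip_mult_eq[OF assms(3,2,5)] by simp_all
  show "ut_mult (unip n X) (unip n T) = ut_mult (ut_mult (unip n W) (unip n T)) (unip n X)"
    unfolding WT(1) unip_mult_eq(1)[OF assms(1,2,4)] unip_mult_eq(1)[OF WT(2) assms(1,6)] ..
qed (use assms(1-3) unip_in_UT in auto)

definition unit_mat :: "nat \<Rightarrow> nat \<Rightarrow> 'a::field \<Rightarrow> 'a mat" where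
  "unit_mat p q c = (\<lambda>a b. if a = p \<and> b = q then c else 0)"

lemma tr_eq_unip: "tr n p q c = unip n (unit_mat p q c)"
  unfolding tr_def unip_def unit_mat_def by simp

lemma strictly_upper_unit_mat: "idx n p \<Longrightarrow> idx n q \<Longrightarrow> p < q \<Longrightarrow> strictly_upper n (unit_mat p q c)"
  unfolding strictly_upper_def unit_mat_def by auto

lemma ut_mult_unit_mat_right:
  "ut_mult S (unit_mat p q c) a b = (if b = q \<and> a \<le> p \<and> p \<le> q then S a p * c else 0)"
proof -
  have "ut_mult S (unit_mat p q c) a b
      = (\<Sum>l\<in>{a..b}. if l = p then (if b = q then S a p * c else 0) else 0)"
    unfolding ut_mult_def unit_mat_def by (rule sum.cong) auto
  then show ?thesis by auto
qed

lemma ut_mult_unit_mat_left: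
  "ut_mult (unit_mat p q c) S a b = (if a = p \<and> p \<le> q \<and> q \<le> b then c * S q b else 0)"
proof -
  have "ut_mult (unit_mat p q c) S a b
      = (\<Sum>l\<in>{a..b}. if l = q then (if a = p then c * S q b else 0) else 0)"
    unfolding ut_mult_def unit_mat_def by (rule sum.cong) auto
  then show ?thesis by auto
qed

lemma ut_mult_eq_0I: "(\<And>l. S a l * T l b = 0) \<Longrightarrow> ut_mult S T a b = 0"
  unfolding ut_mult_def by (rule sum.neutral) blast

lemma ut_mult_add_right:
  "ut_mult S (\<lambda>a b. T a b + U a b) a b = ut_mult S T a b + ut_mult S U a b"
  unfolding ut_mult_def by (simp add: distrib_left sum.distrib)

lemma idx_le: "enat m \<le> n \<Longrightarrow> 1 \<le> i \<Longrightarrow> i \<le> m \<Longrightarrow> idx n i"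
  unfolding idx_def by (meson enat_ord_simps(1) order_trans)

definition column_mat :: "nat \<Rightarrow> nat \<Rightarrow> nat \<Rightarrow> (nat \<Rightarrow> 'a::field) \<Rightarrow> 'a mat" where
  "column_mat l m c \<alpha> = (\<lambda>a b. if l \<le> a \<and> a < m \<and> b = c then \<alpha> a else 0)"

lemma strictly_upper_column_mat:
  "enat c \<le> n \<Longrightarrow> 1 \<le> l \<Longrightarrow> m \<le> c \<Longrightarrow> strictly_upper n (column_mat l m c \<alpha>)"
  unfolding strictly_upper_def column_mat_def by (auto intro: idx_le)

lemma ut_prod_column_transvections:
  assumes "enat c \<le> n" "m \<le> c" "1 \<le> l"
  shows "ut_prod n (map (\<lambda>i. tr n i c (\<alpha> i)) [l..<m]) = unip n (column_mat l m c \<alpha>)"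
  using assms(3)
proof (induction "m - l" arbitrary: l)
  case 0
  then show ?case unfolding ut_prod_def unip_def column_mat_def by (auto intro!: ext)
next
  case (Suc d)
  then have lm: "l < m" by auto
  have IH: "ut_prod n (map (\<lambda>i. tr n i c (\<alpha> i)) [Suc l..<m]) = unip n (column_mat (Suc l) m c \<alpha>)"
    using Suc by simp
  have head: "strictly_upper n (unit_mat l c (\<alpha> l))"
    using Suc.prems lm assms by (intro strictly_upper_unit_mat) (auto intro: idx_le)
  have tail: "strictly_upper n (column_mat (Suc l) m c \<alpha>)"
    using assms by (intro strictly_upper_column_mat) auto
  have "ut_prod n (map (\<lambda>i. tr n i c (\<alpha> i)) [l..<m])
      = ut_mult (tr n l c (\<alpha> l)) (ut_prod n (map (\<lambda>i. tr n i c (\<alpha> i)) [Suc l..<m]))"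
    using lm by (simp add: ut_prod_def upt_rec)
  also have "\<dots> = unip n (column_mat l m c \<alpha>)"
    unfolding IH tr_eq_unip[of n l] using lm assms
    by (intro unip_mult_eq(1)[OF head tail], unfold ut_mult_unit_mat_left)
      (auto simp: unit_mat_def column_mat_def)
  finally show ?case .
qed

definition Y_mat :: "nat \<Rightarrow> 'a::field \<Rightarrow> (nat \<Rightarrow> 'a) \<Rightarrow> 'a mat" where
  "Y_mat k \<beta> \<alpha> = (\<lambda>a b. unit_mat (k+1) (k+2) \<beta> a b + column_mat 1 k k \<alpha> a b)"

definition G_mat :: "nat \<Rightarrow> 'a::field \<Rightarrow> (nat \<Rightarrow> 'a) \<Rightarrow> 'a mat" where
  "G_mat k \<beta> \<alpha> = (\<lambda>a b. column_mat 1 k (k+1) \<alpha> a b + unit_mat k (k+2) (-\<beta>) a b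
     + column_mat 1 k (k+2) (\<lambda>i. -\<beta> * \<alpha> i) a b)"

context
  fixes n :: enat and k :: nat
  assumes kn: "enat (k+3) \<le> n" and k1: "1 \<le> k"
begin

lemma idx_upto_k3: "1 \<le> i \<Longrightarrow> i \<le> k+3 \<Longrightarrow> idx n i"
  using idx_le[OF kn] .

lemma strictly_upper_unit_mat_k3: "1 \<le> p \<Longrightarrow> p < q \<Longrightarrow> q \<le> k+3 \<Longrightarrow> strictly_upper n (unit_mat p q c)"
  by (rule strictly_upper_unit_mat) (auto intro: idx_upto_k3)

lemma tr_in_UT_k3: "1 \<le> p \<Longrightarrow> p < q \<Longrightarrow> q \<le> k+3 \<Longrightarrow> tr n p q c \<in> UT n"
  unfolding tr_eq_unip by (intro unip_in_UT strictly_upper_unit_mat_k3)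

lemma strictly_upper_column_mat_k3: "m \<le> c \<Longrightarrow> c \<le> k+3 \<Longrightarrow> strictly_upper n (column_mat 1 m c \<alpha>)"
  using kn by (intro strictly_upper_column_mat) (auto intro: order_trans[rotated])

lemma strictly_upper_Y_mat: "strictly_upper n (Y_mat k \<beta> \<alpha>)"
  unfolding strictly_upper_def Y_mat_def unit_mat_def column_mat_def
  using k1 by (auto intro: idx_upto_k3)

lemma strictly_upper_G_mat: "strictly_upper n (G_mat k \<beta> \<alpha>)"
  unfolding strictly_upper_def G_mat_def unit_mat_def column_mat_def
  using k1 by (auto intro: idx_upto_k3)

lemma Y_element_eq:
  "ut_mult (tr n (k+1) (k+2) \<beta>) (ut_prod n (map (\<lambda>i. tr n i k (\<alpha> i)) [1..<k]))
   = unip n (Y_mat k \<beta> \<alpha>)"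
proof -
  have "ut_prod n (map (\<lambda>i. tr n i k (\<alpha> i)) [1..<k]) = unip n (column_mat 1 k k \<alpha>)"
    using kn by (intro ut_prod_column_transvections) (auto intro: order_trans[rotated])
  moreover have "ut_mult (unip n (unit_mat (k+1) (k+2) \<beta>)) (unip n (column_mat 1 k k \<alpha>))
      = unip n (Y_mat k \<beta> \<alpha>)"
    by (rule unip_mult_eq(1)[OF strictly_upper_unit_mat_k3 strictly_upper_column_mat_k3])
      (auto simp: ut_mult_unit_mat_left Y_mat_def column_mat_def)
  ultimately show ?thesis by (simp only: tr_eq_unip[of n "k+1"])
qed

lemma ut_comm_Y_mat_tr:
  "ut_comm n (unip n (Y_mat k \<beta> \<alpha>)) (tr n k (k+1) 1) = unip n (G_mat k \<beta> \<alpha>)"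
  unfolding tr_eq_unip
proof (rule ut_comm_unipI[OF strictly_upper_Y_mat _ strictly_upper_G_mat])
  let ?T = "unit_mat k (k+1) (1::'a)"
  show "strictly_upper n ?T" using k1 by (intro strictly_upper_unit_mat_k3) auto
  fix a b
  show "Y_mat k \<beta> \<alpha> a b + ?T a b + ut_mult (Y_mat k \<beta> \<alpha>) ?T a b
      = Y_mat k \<beta> \<alpha> a b + ?T a b + column_mat 1 k (k+1) \<alpha> a b"
    unfolding ut_mult_unit_mat_right by (auto simp: Y_mat_def unit_mat_def column_mat_def)
  show "G_mat k \<beta> \<alpha> a b + ?T a b + ut_mult (G_mat k \<beta> \<alpha>) ?T a b = G_mat k \<beta> \<alpha> a b + ?T a b"
    unfolding ut_mult_unit_mat_right by (auto simp: G_mat_def unit_mat_def column_mat_def)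
  let ?V = "\<lambda>a b. G_mat k \<beta> \<alpha> a b + ?T a b"
  have V_col: "?V a (k+1) = (if 1 \<le> a \<and> a < k then \<alpha> a else if a = k then 1 else 0)"
    by (simp add: G_mat_def unit_mat_def column_mat_def)
  have "ut_mult ?V (column_mat 1 k k \<alpha>) a b = 0"
    by (rule ut_mult_eq_0I) (simp add: G_mat_def unit_mat_def column_mat_def)
  then have VY: "ut_mult ?V (Y_mat k \<beta> \<alpha>) a b = (if b = k+2 \<and> a \<le> k+1 then ?V a (k+1) * \<beta> else 0)"
    unfolding Y_mat_def ut_mult_add_right ut_mult_unit_mat_right by simp
  have G_eq: "G_mat k \<beta> \<alpha> a b
      = column_mat 1 k (k+1) \<alpha> a b - (if b = k+2 \<and> a \<le> k+1 then ?V a (k+1) * \<beta> else 0)"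
    unfolding V_col by (auto simp: G_mat_def unit_mat_def column_mat_def)
  show "?V a b + Y_mat k \<beta> \<alpha> a b + ut_mult ?V (Y_mat k \<beta> \<alpha>) a b
      = Y_mat k \<beta> \<alpha> a b + ?T a b + column_mat 1 k (k+1) \<alpha> a b"
    unfolding VY G_eq by (simp add: algebra_simps)
qed

lemma ut_comm_G_mat_tr:
  "ut_comm n (unip n (G_mat k \<beta> \<alpha>)) (tr n (k+2) (k+3) 1)
   = unip n (column_mat 1 (k+1) (k+3) (\<lambda>i. if i = k then -\<beta> else -\<beta> * \<alpha> i))"
  (is "_ = unip n ?Z")
  unfolding tr_eq_unip
proof (rule ut_comm_unipI[OF strictly_upper_G_mat])
  let ?T = "unit_mat (k+2) (k+3) (1::'a)"
  show "strictly_upper n ?T" by (intro strictly_upper_unit_mat_k3) auto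
  show "strictly_upper n ?Z" by (intro strictly_upper_column_mat_k3) auto
  fix a b
  show "G_mat k \<beta> \<alpha> a b + ?T a b + ut_mult (G_mat k \<beta> \<alpha>) ?T a b = G_mat k \<beta> \<alpha> a b + ?T a b + ?Z a b"
    unfolding ut_mult_unit_mat_right using k1 by (auto simp: G_mat_def unit_mat_def column_mat_def)
  show "?Z a b + ?T a b + ut_mult ?Z ?T a b = ?Z a b + ?T a b"
    unfolding ut_mult_unit_mat_right by (auto simp: column_mat_def)
  have "ut_mult (\<lambda>a b. ?Z a b + ?T a b) (G_mat k \<beta> \<alpha>) a b = 0"
    by (rule ut_mult_eq_0I) (auto simp: G_mat_def unit_mat_def column_mat_def)
  then show "?Z a b + ?T a b + G_mat k \<beta> \<alpha> a b + ut_mult (\<lambda>a b. ?Z a b + ?T a b) (G_mat k \<beta> \<alpha>) a b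
      = G_mat k \<beta> \<alpha> a b + ?T a b + ?Z a b"
    by (simp add: ac_simps)
qed

lemma ut_comm_Y_mat_tr_far:
  "ut_comm n (unip n (Y_mat k \<beta> \<alpha>)) (tr n k (k+3) 1) = unip n (column_mat 1 (k+1) (k+3) (\<alpha>(k := 0)))"
  (is "_ = unip n ?Z")
  unfolding tr_eq_unip
proof (rule ut_comm_unipI[OF strictly_upper_Y_mat])
  let ?T = "unit_mat k (k+3) (1::'a)"
  show "strictly_upper n ?T" using k1 by (intro strictly_upper_unit_mat_k3) auto
  show "strictly_upper n ?Z" by (intro strictly_upper_column_mat_k3) auto
  fix a b
  show "Y_mat k \<beta> \<alpha> a b + ?T a b + ut_mult (Y_mat k \<beta> \<alpha>) ?T a b = Y_mat k \<beta> \<alpha> a b + ?T a b + ?Z a b"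
    unfolding ut_mult_unit_mat_right by (auto simp: Y_mat_def unit_mat_def column_mat_def)
  show "?Z a b + ?T a b + ut_mult ?Z ?T a b = ?Z a b + ?T a b"
    unfolding ut_mult_unit_mat_right by (auto simp: column_mat_def)
  have "ut_mult (\<lambda>a b. ?Z a b + ?T a b) (Y_mat k \<beta> \<alpha>) a b = 0"
    by (rule ut_mult_eq_0I) (auto simp: Y_mat_def unit_mat_def column_mat_def)
  then show "?Z a b + ?T a b + Y_mat k \<beta> \<alpha> a b + ut_mult (\<lambda>a b. ?Z a b + ?T a b) (Y_mat k \<beta> \<alpha>) a b
      = Y_mat k \<beta> \<alpha> a b + ?T a b + ?Z a b"
    by (simp add: ac_simps)
qed

context
  fixes \<phi> :: "'a::field mat \<Rightarrow> 'a mat"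
  assumes PC: "PC_map n \<phi>" and almost_id: "almost_identity n \<phi>" and Y_k: "cond_Y n \<phi> k"
begin

lemma tr_fixed: "1 \<le> p \<Longrightarrow> p < q \<Longrightarrow> q \<le> k+3 \<Longrightarrow> \<phi> (tr n p q c) = tr n p q c"
  using almost_id idx_upto_k3 unfolding almost_identity_def by auto

lemma fixes_ut_comm_Y_mat:
  "t \<in> UT n \<Longrightarrow> \<phi> t = t \<Longrightarrow> \<phi> (ut_comm n (unip n (Y_mat k \<beta> \<alpha>)) t) = ut_comm n (unip n (Y_mat k \<beta> \<alpha>)) t"
  using Y_k unfolding cond_Y_def Let_def Y_element_eq
  by (intro PC_map_fixes_ut_comm[OF PC unip_in_UT[OF strictly_upper_Y_mat]]) simp_all

lemma fixes_column_if_corner_zero: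
  assumes "\<gamma> k = 0"
  shows "\<phi> (unip n (column_mat 1 (k+1) (k+3) \<gamma>)) = unip n (column_mat 1 (k+1) (k+3) \<gamma>)"
proof -
  have "unip n (column_mat 1 (k+1) (k+3) \<gamma>) = ut_comm n (unip n (Y_mat k 0 \<gamma>)) (tr n k (k+3) 1)"
    unfolding ut_comm_Y_mat_tr_far using assms by (simp add: fun_upd_idem)
  moreover have "\<phi> (ut_comm n (unip n (Y_mat k 0 \<gamma>)) (tr n k (k+3) 1))
      = ut_comm n (unip n (Y_mat k 0 \<gamma>)) (tr n k (k+3) 1)"
    using k1 by (auto intro!: fixes_ut_comm_Y_mat tr_in_UT_k3 tr_fixed)
  ultimately show ?thesis by simp
qed

lemma fixes_column_if_corner_nonzero:
  assumes "\<gamma> k \<noteq> 0"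
  shows "\<phi> (unip n (column_mat 1 (k+1) (k+3) \<gamma>)) = unip n (column_mat 1 (k+1) (k+3) \<gamma>)"
proof -
  define \<beta> where "\<beta> = - \<gamma> k"
  define \<alpha> where "\<alpha> = (\<lambda>i. \<gamma> i / \<gamma> k)"
  have "column_mat 1 (k+1) (k+3) \<gamma> = column_mat 1 (k+1) (k+3) (\<lambda>i. if i = k then -\<beta> else -\<beta> * \<alpha> i)"
    unfolding column_mat_def \<beta>_def \<alpha>_def using assms by (intro ext) auto
  then have Z_eq: "unip n (column_mat 1 (k+1) (k+3) \<gamma>)
      = ut_comm n (unip n (G_mat k \<beta> \<alpha>)) (tr n (k+2) (k+3) 1)"
    unfolding ut_comm_G_mat_tr by simp
  have G_fixed: "\<phi> (unip n (G_mat k \<beta> \<alpha>)) = unip n (G_mat k \<beta> \<alpha>)"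
    unfolding ut_comm_Y_mat_tr[symmetric]
    using k1 by (auto intro!: fixes_ut_comm_Y_mat tr_in_UT_k3 tr_fixed)
  have t: "tr n (k+2) (k+3) (1::'a) \<in> UT n" "\<phi> (tr n (k+2) (k+3) 1) = tr n (k+2) (k+3) 1"
    using k1 by (auto intro!: tr_in_UT_k3 tr_fixed)
  have "\<phi> (ut_comm n (unip n (G_mat k \<beta> \<alpha>)) (tr n (k+2) (k+3) 1))
      = ut_comm n (unip n (G_mat k \<beta> \<alpha>)) (tr n (k+2) (k+3) 1)"
    using PC_map_ut_comm[OF PC unip_in_UT[OF strictly_upper_G_mat] t(1)] t(2) G_fixed by simp
  with Z_eq show ?thesis by simp
qed

end

end

theorem mainTheorem3:
  fixes n :: enat and \<phi> :: "('a::field) mat \<Rightarrow> 'a mat" and k :: nat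
  assumes "PC_map n \<phi>" and "almost_identity n \<phi>"
    and "2 \<le> k" and "enat k \<le> n - 3"
    and "cond_Z n \<phi> (k - 1)" and "cond_Y n \<phi> k"
  shows "cond_Z n \<phi> k"
  unfolding cond_Z_def Let_def
proof
  fix \<gamma> :: "nat \<Rightarrow> 'a"
  have k1: "1 \<le> k" using assms(3) by simp
  have kn: "enat (k+3) \<le> n"
    using assms(4) k1 by (cases n) (simp_all add: numeral_eq_enat)
  have "ut_prod n (map (\<lambda>i. tr n i (k+3) (\<gamma> i)) [1..<k+1]) = unip n (column_mat 1 (k+1) (k+3) \<gamma>)"
    by (rule ut_prod_column_transvections[OF kn]) simp_all
  moreover have "\<phi> (unip n (column_mat 1 (k+1) (k+3) \<gamma>)) = unip n (column_mat 1 (k+1) (k+3) \<gamma>)"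
    using fixes_column_if_corner_zero[OF kn k1 assms(1,2,6)]
      fixes_column_if_corner_nonzero[OF kn k1 assms(1,2,6)] by blast
  ultimately show "\<phi> (ut_prod n (map (\<lambda>i. tr n i (k+3) (\<gamma> i)) [1..<k+1]))
      = ut_prod n (map (\<lambda>i. tr n i (k+3) (\<gamma> i)) [1..<k+1])"
    by simp
qed

end
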